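(* Assume $\hat{\Omega}_{1:r} = \Omega_{1:r}$. Then $\Sigma$ and $\hat{\Sigma}$ satisfy: (T1) (MSS) For any $\rho \geq \rho(\boldsymbol{\mathcal{A}})$ and its corresponding $\tau$, any $\hat{\rho} \geq \rho(\hat{\boldsymbol{\mathcal{A}}})$ and its corresponding $\bar{\tau}$, \[ \rho(\hat{\boldsymbol{\mathcal{A}}}) - \rho(\boldsymbol{\mathcal{A}}) \leq \tau \epsilon_\rho + (\rho - \rho(\boldsymbol{\mathcal{A}})),\qquad \rho(\boldsymbol{\mathcal{A}}) - \rho(\hat{\boldsymbol{\mathcal{A}}}) \leq \bar{\tau} \epsilon_\rho + (\hat{\rho} - \rho(\hat{\boldsymbol{\mathcal{A}}})),\] where $\epsilon_\rho:= \sqrt{s} ((2 \bar{A} + \epsilon_{\mathbf{A}}) \epsilon_{\mathbf{A}} + \bar{A}^2 \epsilon_{\mathbf{T}})$. (T2) (Uniform stability) For any $\xi \geq \xi(\mathbf{A}_{1:s})$ and its corresponding $\kappa$, any $\hat{\xi} \geq \xi(\hat{\mathbf{A}}_{1:r})$ and its corresponding $\bar{\kappa}$, \[ \xi(\hat{\mathbf{A}}_{1:r}) - \xi(\mathbf{A}_{1:s}) \leq \kappa \epsilon_{\mathbf{A}} + (\xi - \xi(\mathbf{A}_{1:s})),\qquad \xi(\mathbf{A}_{1:s}) - \xi(\hat{\mathbf{A}}_{1:r}) \leq \bar{\kappa} \epsilon_{\mathbf{A}} + (\hat{\xi} - \xi(\hat{\mathbf{A}}_{1:r})).\]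
   Context: $\Sigma$ is an MJS $\mathbf{x}_{t+1}=\mathbf{A}_{\omega_t}\mathbf{x}_t+\mathbf{B}_{\omega_t}\mathbf{u}_t$ with $s$ modes and ergodic Markov matrix $\mathbf{T}$; given a partition $\Omega_{1:r}$ of $[s]$, $\sum_k\sum_{i,i'\in\Omega_k}\|\mathbf{A}_i-\mathbf{A}_{i'}\|_F\le\epsilon_{\mathbf{A}}$, similarly for $\mathbf{B}$ with $\epsilon_{\mathbf{B}}$, and $\mathbf{T}$ is $\epsilon_{\mathbf{T}}$-approximately lumpable ($\sum_{k,l}\sum_{i,i'\in\Omega_k}|\sum_{j\in\Omega_l}\mathbf{T}(i,j)-\sum_{j\in\Omega_l}\mathbf{T}(i',j)|\le\epsilon_{\mathbf{T}}$) or aggregatable ($\sum_k\sum_{i,i'\in\Omega_k}\|\mathbf{T}(i,:)-\mathbf{T}(i',:)\|_1\le\epsilon_{\mathbf{T}}$). Given estimated partition $\hat{\Omega}_{1:r}$, the reduced MJS $\hat{\Sigma}$ has $\hat{\mathbf{A}}_k$, $\hat{\mathbf{B}}_k$ the averages of $\mathbf{A}_i$, $\mathbf{B}_i$ over $i\in\hat{\Omega}_k$ and $\hat{\mathbf{T}}(k,l)=\frac{1}{|\hat{\Omega}_k|}\sum_{i\in\hat{\Omega}_k,j\in\hat{\Omega}_l}\mathbf{T}(i,j)$. The expanded MJS has $s$ modes with $\bar{\mathbf{A}}_i=\hat{\mathbf{A}}_k$ for $i\in\hat{\Omega}_k$ and Markov matrix $\bar{\mathbf{T}}$ with $\|\bar{\mathbf{T}}-\mathbf{T}\|_\infty\le\epsilon_{\mathbf{T}}$,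 $\|\bar{\mathbf{T}}-\mathbf{T}\|_F\le\epsilon_{\mathbf{T}}$, and $\sum_{j\in\hat{\Omega}_l}\bar{\mathbf{T}}(i,j)=\hat{\mathbf{T}}(k,l)$ for $i\in\hat{\Omega}_k$. Augmented matrices: $\boldsymbol{\mathcal{A}}$ ($sn^2\times sn^2$) with $ij$-th block $\mathbf{T}(j,i)\mathbf{A}_j\otimes\mathbf{A}_j$, $\hat{\boldsymbol{\mathcal{A}}}$ ($rn^2\times rn^2$) with blocks $\hat{\mathbf{T}}(j,i)\hat{\mathbf{A}}_j\otimes\hat{\mathbf{A}}_j$, $\bar{\boldsymbol{\mathcal{A}}}$ with blocks $\bar{\mathbf{T}}(j,i)\bar{\mathbf{A}}_j\otimes\bar{\mathbf{A}}_j$; $\rho(\cdot)$ is the spectral radius, $\xi(\cdot)$ the joint spectral radius. $\tau:=\sup_{k\in\mathbb{N}}\|\boldsymbol{\mathcal{A}}^k\|/\rho^k$, $\bar{\tau}:=\sup_k\|\bar{\boldsymbol{\mathcal{A}}}^k\|/\hat{\rho}^k$, $\kappa:=\sup_k\max_{\omega_{1:k}\in[s]^k}\|\mathbf{A}_{\omega_1}\cdots\mathbf{A}_{\omega_k}\|/\xi^k$, $\bar{\kappa}:=\sup_k\max_{\omega_{1:k}}\|\bar{\mathbf{A}}_{\omega_1}\cdots\bar{\mathbf{A}}_{\omega_k}\|/\hat{\xi}^k$. The scalar $\bar{A}:=\max_i\|\mathbf{A}_i\|$. *)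

theory Defs
  imports "HOL-Analysis.Analysis"
begin

text \<open>Modes of the MJS are the elements of a finite type 's (so s = CARD('s));
  the clusters are the elements of a finite type 'r (so r = CARD('r)); the partition
  Omega_{1:r} is given by a surjective cluster map cl :: 's => 'r with
  Omega_k = {i. cl i = k}.  State dimension n = CARD('n), input dimension p = CARD('p).
  Matrices are HOL-Analysis matrices real^'c^'r; norm on them is the Frobenius norm,
  spec_norm is the spectral (operator 2-) norm.\<close>

definition spec_norm :: "real^'m^'k \<Rightarrow> real" where
  "spec_norm M = onorm (\<lambda>x. M *v x)"

definition frob_norm :: "real^'m^'k \<Rightarrow> real" where
  "frob_norm M = sqrt (\<Sum>i\<in>UNIV. \<Sum>j\<in>UNIV. (M $ i $ j)^2)"

definition inf_norm :: "('s::finite \<Rightarrow> 's \<Rightarrow> real) \<Rightarrow> real" where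
  "inf_norm M = Max ((\<lambda>i. \<Sum>j\<in>UNIV. \<bar>M i j\<bar>) ` UNIV)"

definition frob_norm_fun :: "('s::finite \<Rightarrow> 's \<Rightarrow> real) \<Rightarrow> real" where
  "frob_norm_fun M = sqrt (\<Sum>i\<in>UNIV. \<Sum>j\<in>UNIV. (M i j)^2)"

fun mpow :: "real^'m^'m \<Rightarrow> nat \<Rightarrow> real^'m^'m" where
  "mpow M 0 = mat 1"
| "mpow M (Suc k) = M ** mpow M k"

definition spectrum_real :: "real^'m^'m \<Rightarrow> complex set" where
  "spectrum_real M = {c. \<exists>v :: complex^'m. v \<noteq> 0 \<and>
      (\<chi> i j. complex_of_real (M $ i $ j)) *v v = c *s v}"

definition spectral_radius :: "real^'m^'m \<Rightarrow> real" where
  "spectral_radius M = Max (cmod ` spectrum_real M)"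

definition kron :: "real^'n^'n \<Rightarrow> real^'n^'n \<Rightarrow> real^('n \<times> 'n)^('n \<times> 'n)" where
  "kron A B = (\<chi> x y. A $ fst x $ fst y * B $ snd x $ snd y)"

text \<open>augmented (second moment) matrix: ij-th block is T(j,i) A_j (x) A_j\<close>
definition aug :: "('m::finite \<Rightarrow> 'm \<Rightarrow> real) \<Rightarrow> ('m \<Rightarrow> real^'n^'n)
    \<Rightarrow> real^('m \<times> ('n \<times> 'n))^('m \<times> ('n \<times> 'n))" where
  "aug T A = (\<chi> x y. T (fst y) (fst x) * kron (A (fst y)) (A (fst y)) $ snd x $ snd y)"

definition word_prod :: "('m \<Rightarrow> real^'n^'n) \<Rightarrow> 'm list \<Rightarrow> real^'n^'n" where
  "word_prod A w = foldr (\<lambda>i M. A i ** M) w (mat 1)"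

definition max_prod_norm :: "('m::finite \<Rightarrow> real^'n^'n) \<Rightarrow> nat \<Rightarrow> real" where
  "max_prod_norm A k = Max ((\<lambda>w. spec_norm (word_prod A w)) ` {w. length w = k})"

definition jsr :: "('m::finite \<Rightarrow> real^'n^'n) \<Rightarrow> real" where
  "jsr A = lim (\<lambda>k. root k (max_prod_norm A k))"

definition tau_const :: "real^'m^'m \<Rightarrow> real \<Rightarrow> real" where
  "tau_const M \<rho> = (SUP k. spec_norm (mpow M k) / \<rho> ^ k)"

definition kappa_const :: "('m::finite \<Rightarrow> real^'n^'n) \<Rightarrow> real \<Rightarrow> real" where
  "kappa_const A \<xi> = (SUP k. max_prod_norm A k / \<xi> ^ k)"

definition markov :: "('s::finite \<Rightarrow> 's \<Rightarrow> real) \<Rightarrow> bool" where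
  "markov T \<longleftrightarrow> (\<forall>i j. 0 \<le> T i j) \<and> (\<forall>i. (\<Sum>j\<in>UNIV. T i j) = 1)"

fun fpow :: "('s::finite \<Rightarrow> 's \<Rightarrow> real) \<Rightarrow> nat \<Rightarrow> 's \<Rightarrow> 's \<Rightarrow> real" where
  "fpow T 0 = (\<lambda>i j. if i = j then 1 else 0)"
| "fpow T (Suc k) = (\<lambda>i j. \<Sum>l\<in>UNIV. T i l * fpow T k l j)"

text \<open>ergodic (irreducible and aperiodic) finite chain = primitive transition matrix\<close>
definition ergodic :: "('s::finite \<Rightarrow> 's \<Rightarrow> real) \<Rightarrow> bool" where
  "ergodic T \<longleftrightarrow> markov T \<and> (\<exists>k. \<forall>i j. fpow T k i j > 0)"

definition cluster :: "('s \<Rightarrow> 'r) \<Rightarrow> 'r \<Rightarrow> 's set" where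
  "cluster cl k = {i. cl i = k}"

definition approx_lumpable :: "('s::finite \<Rightarrow> 's \<Rightarrow> real) \<Rightarrow> ('s \<Rightarrow> 'r::finite) \<Rightarrow> real \<Rightarrow> bool" where
  "approx_lumpable T cl \<epsilon> \<longleftrightarrow>
     (\<Sum>k\<in>UNIV. \<Sum>l\<in>UNIV. \<Sum>i\<in>cluster cl k. \<Sum>i'\<in>cluster cl k.
        \<bar>(\<Sum>j\<in>cluster cl l. T i j) - (\<Sum>j\<in>cluster cl l. T i' j)\<bar>) \<le> \<epsilon>"

definition approx_aggregatable :: "('s::finite \<Rightarrow> 's \<Rightarrow> real) \<Rightarrow> ('s \<Rightarrow> 'r::finite) \<Rightarrow> real \<Rightarrow> bool" where
  "approx_aggregatable T cl \<epsilon> \<longleftrightarrow>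
     (\<Sum>k\<in>UNIV. \<Sum>i\<in>cluster cl k. \<Sum>i'\<in>cluster cl k. \<Sum>j\<in>UNIV. \<bar>T i j - T i' j\<bar>) \<le> \<epsilon>"

definition red_mat :: "('s::finite \<Rightarrow> real^'c^'n) \<Rightarrow> ('s \<Rightarrow> 'r) \<Rightarrow> 'r \<Rightarrow> real^'c^'n" where
  "red_mat A cl k = (1 / real (card (cluster cl k))) *\<^sub>R (\<Sum>i\<in>cluster cl k. A i)"

definition red_T :: "('s::finite \<Rightarrow> 's \<Rightarrow> real) \<Rightarrow> ('s \<Rightarrow> 'r) \<Rightarrow> 'r \<Rightarrow> 'r \<Rightarrow> real" where
  "red_T T cl k l = (1 / real (card (cluster cl k))) * (\<Sum>i\<in>cluster cl k. \<Sum>j\<in>cluster cl l. T i j)"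

end

(* With the true partition the expanded system is a small perturbation of the original one: each
   expanded mode matrix is within epsA of A_i, so each Kronecker block A_i (x) A_i moves by at most
   (2 Abar + epsA) epsA, the transition weights move by at most epsT in Frobenius norm, and the
   augmented matrices differ by at most eps_rho in spectral norm.  If |M^k| <= tau rho^k, expanding
   (M + E)^k factor by factor gives |(M + E)^k| <= tau (rho + tau |E|)^k, and a spectral radius is
   at most the growth rate of the power norms.  Aggregation over the clusters intertwines the
   expanded and the reduced augmented matrices, so the reduced one grows no faster than the expanded
   one.  The same expansion of products of mode matrices bounds the joint spectral radius, and the
   words over reduced modes are exactly the words over expanded modes. *)

theory Submission
  imports Defs "Jordan_Normal_Form.Char_Poly"
begin

hide_const (open) Matrix.mat Matrix.vec Determinant.det Matrix.transpose_mat Matrix.row Matrix.col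
no_notation Matrix.vec_index (infixl "$" 100)
no_notation Matrix.scalar_prod (infix "\<bullet>" 70)

section \<open>Spectral and Frobenius norms\<close>

lemma spec_norm_mult_vec_le: "norm ((M::real^'m::finite^'k::finite) *v x) \<le> spec_norm M * norm x"
  unfolding spec_norm_def by (rule onorm[OF matrix_vector_mul_bounded_linear])

lemma spec_norm_le:
  assumes "0 \<le> b" and "\<And>x. norm ((M::real^'m::finite^'k::finite) *v x) \<le> b * norm x"
  shows "spec_norm M \<le> b"
  unfolding spec_norm_def using assms by (rule onorm_bound)

lemma spec_norm_nonneg: "0 \<le> spec_norm (M::real^'m::finite^'k::finite)"
  unfolding spec_norm_def by (rule onorm_pos_le[OF matrix_vector_mul_bounded_linear])

lemma spec_norm_add_le:
  "spec_norm ((M::real^'m::finite^'k::finite) + N) \<le> spec_norm M + spec_norm N"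
  unfolding spec_norm_def matrix_vector_mult_add_rdistrib
  by (intro onorm_triangle matrix_vector_mul_bounded_linear)

lemma spec_norm_minus_commute: "spec_norm ((M::real^'m::finite^'k::finite) - N) = spec_norm (N - M)"
proof -
  have "(N - M) *v x = - ((M - N) *v x)" for x
    by (simp add: matrix_vector_mult_diff_rdistrib)
  then have neg: "(*v) (N - M) = (\<lambda>x. - ((M - N) *v x))" by auto
  show ?thesis
    unfolding spec_norm_def neg onorm_neg ..
qed

lemma spec_norm_mult_le:
  fixes X :: "real^'m::finite^'k::finite" and Y :: "real^'l::finite^'m"
  shows "spec_norm (X ** Y) \<le> spec_norm X * spec_norm Y"
proof (rule spec_norm_le)
  show "0 \<le> spec_norm X * spec_norm Y" by (simp add: spec_norm_nonneg)
  fix x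
  have "norm ((X ** Y) *v x) = norm (X *v (Y *v x))" by (simp add: matrix_vector_mul_assoc)
  also have "\<dots> \<le> spec_norm X * norm (Y *v x)" by (rule spec_norm_mult_vec_le)
  also have "\<dots> \<le> spec_norm X * (spec_norm Y * norm x)"
    by (intro mult_left_mono spec_norm_mult_vec_le spec_norm_nonneg)
  finally show "norm ((X ** Y) *v x) \<le> spec_norm X * spec_norm Y * norm x" by (simp add: mult.assoc)
qed

lemma norm_vec_squared: "(norm (x::'a::real_normed_vector^'n))\<^sup>2 = (\<Sum>i\<in>UNIV. (norm (x $ i))\<^sup>2)"
  unfolding norm_vec_def L2_set_def by (simp add: sum_nonneg)

lemma norm_real_vec_squared: "(norm (x::real^'n))\<^sup>2 = (\<Sum>i\<in>UNIV. (x $ i)\<^sup>2)"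
  unfolding norm_vec_squared by simp

lemma frob_norm_eq_norm: "frob_norm (M::real^'m::finite^'k::finite) = norm M"
proof -
  have "(norm M)\<^sup>2 = (\<Sum>i\<in>UNIV. \<Sum>j\<in>UNIV. (M $ i $ j)\<^sup>2)"
    unfolding norm_vec_squared by (simp add: norm_real_vec_squared)
  then show ?thesis unfolding frob_norm_def by (metis norm_ge_zero real_sqrt_unique)
qed

lemma spec_norm_le_norm: "spec_norm (M::real^'m::finite^'k::finite) \<le> norm M"
proof (rule spec_norm_le[OF norm_ge_zero])
  fix x
  have "(norm (M *v x))\<^sup>2 = (\<Sum>i\<in>UNIV. (inner (M $ i) x)\<^sup>2)"
    unfolding norm_real_vec_squared matrix_vector_mul_component ..
  also have "\<dots> \<le> (\<Sum>i\<in>UNIV. (norm (M $ i) * norm x)\<^sup>2)"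
    by (intro sum_mono) (metis Cauchy_Schwarz_ineq2 abs_ge_zero power2_abs power_mono)
  also have "\<dots> = (norm M * norm x)\<^sup>2"
    unfolding power_mult_distrib norm_vec_squared[of M] sum_distrib_right ..
  finally show "norm (M *v x) \<le> norm M * norm x" by (simp add: power2_le_iff_abs_le)
qed

section \<open>Spectral radius\<close>

definition cmat :: "real^'n^'m \<Rightarrow> complex^'n^'m" where
  "cmat M = (\<chi> i j. complex_of_real (M $ i $ j))"

lemma cmat_mult: "cmat (M ** N) = cmat M ** cmat N"
  by (simp add: cmat_def matrix_matrix_mult_def Finite_Cartesian_Product.vec_eq_iff)

lemma cmat_mpow_eigenvector:
  assumes "cmat M *v v = c *s v"
  shows "cmat (mpow M k) *v v = c ^ k *s v"
proof (induction k)
  case 0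
  have "cmat (mat 1) = mat 1"
    by (simp add: cmat_def Finite_Cartesian_Product.mat_def Finite_Cartesian_Product.vec_eq_iff)
  then have "cmat (mpow M 0) *v v = v" by (metis mpow.simps(1) matrix_vector_mul_lid)
  then show ?case by (simp add: Finite_Cartesian_Product.vec_eq_iff)
next
  case (Suc k)
  have "cmat (mpow M (Suc k)) *v v = cmat M *v (cmat (mpow M k) *v v)"
    by (simp add: cmat_mult matrix_vector_mul_assoc)
  also have "\<dots> = cmat M *v (c ^ k *s v)" using Suc by simp
  also have "\<dots> = c ^ k *s (cmat M *v v)"
    by (simp add: Finite_Cartesian_Product.vec_eq_iff matrix_vector_mult_def sum_distrib_left
        mult.left_commute)
  also have "\<dots> = c ^ Suc k *s v"
    using assms by (simp add: Finite_Cartesian_Product.vec_eq_iff algebra_simps)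
  finally show ?case .
qed

lemma norm_smult_complex_vec: "norm (c *s (v::complex^'n)) = cmod c * norm v"
proof -
  have "(norm (c *s v))\<^sup>2 = (cmod c * norm v)\<^sup>2"
    unfolding norm_vec_squared power_mult_distrib
    by (simp add: norm_mult power_mult_distrib sum_distrib_left)
  then show ?thesis by (simp add: power2_eq_iff_nonneg)
qed

lemma norm_cmat_mult_vec_le:
  fixes M :: "real^'m::finite^'k::finite"
  shows "norm (cmat M *v v) \<le> spec_norm M * norm v"
proof -
  define re where "re = (\<chi> i. Re (v $ i))"
  define im where "im = (\<chi> i. Im (v $ i))"
  have component: "(cmat M *v v) $ i = Complex ((M *v re) $ i) ((M *v im) $ i)" for i
    by (simp add: cmat_def matrix_vector_mult_def re_def im_def complex_eq_iff)
  have "(norm (cmat M *v v))\<^sup>2 = (norm (M *v re))\<^sup>2 + (norm (M *v im))\<^sup>2"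
    unfolding norm_vec_squared component by (simp add: cmod_power2 sum.distrib)
  also have "\<dots> \<le> (spec_norm M * norm re)\<^sup>2 + (spec_norm M * norm im)\<^sup>2"
    by (intro add_mono power_mono spec_norm_mult_vec_le) auto
  also have "\<dots> = (spec_norm M)\<^sup>2 * ((norm re)\<^sup>2 + (norm im)\<^sup>2)"
    by (simp add: algebra_simps power_mult_distrib)
  also have "(norm re)\<^sup>2 + (norm im)\<^sup>2 = (norm v)\<^sup>2"
    unfolding norm_vec_squared re_def im_def by (simp add: cmod_power2 sum.distrib)
  finally have "(norm (cmat M *v v))\<^sup>2 \<le> (spec_norm M * norm v)\<^sup>2"
    by (simp add: power_mult_distrib)
  then show ?thesis using spec_norm_nonneg[of M] by (simp add: power2_le_iff_abs_le)
qed

lemma reindexed_mult_vec: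
  fixes C :: "'a::comm_ring_1^'m::finite^'m" and f :: "nat \<Rightarrow> 'm"
  assumes f: "bij_betw f {..<CARD('m)} UNIV"
  defines "n \<equiv> CARD('m)"
  shows "Matrix.mat n n (\<lambda>(i, j). C $ f i $ f j) *\<^sub>v Matrix.vec n (\<lambda>i. u $ f i)
    = Matrix.vec n (\<lambda>i. (C *v u) $ f i)"
proof (rule eq_vecI)
  fix i assume "i < dim_vec (Matrix.vec n (\<lambda>i. (C *v u) $ f i))"
  then have i: "i < n" by simp
  have "(\<Sum>j<n. C $ f i $ f j * u $ f j) = (\<Sum>x\<in>UNIV. C $ f i $ x * u $ x)"
    using sum.reindex_bij_betw[OF f, of "\<lambda>x. C $ f i $ x * u $ x"] by (simp add: n_def)
  then show "vec_index (Matrix.mat n n (\<lambda>(i, j). C $ f i $ f j) *\<^sub>v Matrix.vec n (\<lambda>i. u $ f i)) i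
      = vec_index (Matrix.vec n (\<lambda>i. (C *v u) $ f i)) i"
    using i by (simp add: scalar_prod_def Matrix.row_def lessThan_atLeast0 matrix_vector_mult_def)
qed simp

lemma spectrum_real_eq_eigenvalues:
  fixes M :: "real^'m::finite^'m" and f :: "nat \<Rightarrow> 'm"
  assumes f: "bij_betw f {..<CARD('m)} UNIV"
  defines "n \<equiv> CARD('m)"
  shows "spectrum_real M = Collect (eigenvalue (Matrix.mat n n (\<lambda>(i, j). cmat M $ f i $ f j)))"
proof -
  define J where "J = Matrix.mat n n (\<lambda>(i, j). cmat M $ f i $ f j)"
  define V where "V u = Matrix.vec n (\<lambda>i. u $ f i)" for u :: "complex^'m"
  define g where "g = inv_into {..<n} f"
  have fg: "f (g x) = x" and g: "g x < n" for x
    using bij_betw_inv_into_right[OF f] bij_betw_inv_into[OF f]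
    unfolding g_def n_def bij_betw_def by auto
  have V_inj: "u = u'" if "V u = V u'" for u u'
  proof -
    have "u $ f (g x) = u' $ f (g x)" for x
      using arg_cong[OF that, of "\<lambda>v. vec_index v (g x)"] g[of x] by (simp add: V_def)
    then show ?thesis by (simp add: fg Finite_Cartesian_Product.vec_eq_iff)
  qed
  have V_surj: "V (\<chi> x. vec_index v (g x)) = v" if "v \<in> carrier_vec n" for v
    using that f unfolding V_def g_def n_def
    by (auto simp: bij_betw_inv_into_left intro!: eq_vecI)
  have V_smult: "V (c *s u) = c \<cdot>\<^sub>v V u" for c u by (auto simp: V_def)
  have V_zero: "V 0 = 0\<^sub>v n" by (auto simp: V_def)
  have J_V: "J *\<^sub>v V u = V (cmat M *v u)" for u
    unfolding J_def V_def n_def by (rule reindexed_mult_vec[OF f])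
  have "c \<in> spectrum_real M \<longleftrightarrow> eigenvalue J c" for c
  proof
    assume "c \<in> spectrum_real M"
    then obtain u where "u \<noteq> 0" "cmat M *v u = c *s u"
      unfolding spectrum_real_def cmat_def by auto
    then have "V u \<noteq> 0\<^sub>v n" "J *\<^sub>v V u = c \<cdot>\<^sub>v V u"
      using V_inj V_zero J_V V_smult by metis+
    then show "eigenvalue J c"
      unfolding eigenvalue_def eigenvector_def by (intro exI[of _ "V u"]) (simp add: J_def V_def)
  next
    assume "eigenvalue J c"
    then obtain v where v: "v \<in> carrier_vec n" "v \<noteq> 0\<^sub>v n" "J *\<^sub>v v = c \<cdot>\<^sub>v v"
      unfolding eigenvalue_def eigenvector_def J_def by auto
    define u where "u = (\<chi> x. vec_index v (g x))"
    have "V u = v" using V_surj[OF v(1)] by (simp add: u_def)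
    then have "u \<noteq> 0" "cmat M *v u = c *s u"
      using v(2,3) V_inj V_zero J_V V_smult by metis+
    then show "c \<in> spectrum_real M"
      unfolding spectrum_real_def cmat_def by auto
  qed
  then show ?thesis unfolding J_def by auto
qed

lemma spectrum_real_finite_nonempty:
  fixes M :: "real^'m::finite^'m"
  shows "finite (spectrum_real M)" and "spectrum_real M \<noteq> {}"
proof -
  define n where "n = CARD('m)"
  obtain f :: "nat \<Rightarrow> 'm" where f: "bij_betw f {..<CARD('m)} UNIV"
    using ex_bij_betw_nat_finite[of "UNIV::'m set"] by (auto simp: lessThan_atLeast0)
  define J where "J = Matrix.mat n n (\<lambda>(i, j). cmat M $ f i $ f j)"
  have J: "J \<in> carrier_mat n n" by (simp add: J_def)
  have spectrum: "spectrum_real M = {c. poly (char_poly J) c = 0}"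
    using spectrum_real_eq_eigenvalues[OF f] eigenvalue_root_char_poly[OF J]
    unfolding J_def n_def by auto
  have "degree (char_poly J) = n" and "monic (char_poly J)"
    using degree_monic_char_poly[OF J] by auto
  moreover have "0 < n" by (simp add: n_def)
  ultimately have "char_poly J \<noteq> 0" and "\<not> constant (poly (char_poly J))"
    by (auto simp: constant_degree)
  then show "finite (spectrum_real M)" and "spectrum_real M \<noteq> {}"
    unfolding spectrum using poly_roots_finite fundamental_theorem_of_algebra by auto
qed

lemma spectral_radius_nonneg: "0 \<le> spectral_radius (M::real^'m::finite^'m)"
proof -
  obtain c where "c \<in> spectrum_real M"
    using spectrum_real_finite_nonempty(2) by blast
  then have "cmod c \<le> spectral_radius M"
    unfolding spectral_radius_def using spectrum_real_finite_nonempty(1)[of M]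
    by (intro Max_ge) auto
  then show ?thesis by (meson norm_ge_zero order_trans)
qed

lemma le_of_pow_le_const_mult_pow:
  fixes a r K :: real
  assumes "0 \<le> a" and "0 \<le> r" and bound: "\<And>k. a ^ k \<le> K * r ^ k"
  shows "a \<le> r"
proof (rule ccontr)
  assume "\<not> a \<le> r"
  then have "r < a" by simp
  show False
  proof (cases "r = 0")
    case True
    then show False using bound[of 1] \<open>r < a\<close> by simp
  next
    case False
    then have "0 < r" using \<open>0 \<le> r\<close> by simp
    have "1 < a / r" using \<open>r < a\<close> \<open>0 < r\<close> by simp
    then obtain k where "K < (a / r) ^ k" using real_arch_pow by blast
    moreover have "(a / r) ^ k \<le> K"
      using bound[of k] \<open>0 < r\<close> by (simp add: power_divide pos_divide_le_eq)
    ultimately show False by simp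
  qed
qed

lemma spectral_radius_le:
  fixes M :: "real^'m::finite^'m"
  assumes bound: "\<And>k. spec_norm (mpow M k) \<le> K * r ^ k" and "0 \<le> r"
  shows "spectral_radius M \<le> r"
proof -
  have "cmod c \<le> r" if c: "c \<in> spectrum_real M" for c
  proof -
    obtain v where v: "v \<noteq> 0" "cmat M *v v = c *s v"
      using c unfolding spectrum_real_def cmat_def by auto
    have "cmod c ^ k \<le> K * r ^ k" for k
    proof -
      have "cmod c ^ k * norm v = norm (cmat (mpow M k) *v v)"
        by (simp add: cmat_mpow_eigenvector[OF v(2)] norm_smult_complex_vec norm_power)
      also have "\<dots> \<le> K * r ^ k * norm v"
        using norm_cmat_mult_vec_le[of "mpow M k" v] bound[of k]
        by (meson mult_right_mono norm_ge_zero order_trans)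
      finally show ?thesis using v(1) by simp
    qed
    then show ?thesis by (rule le_of_pow_le_const_mult_pow[OF norm_ge_zero \<open>0 \<le> r\<close>])
  qed
  then show ?thesis
    unfolding spectral_radius_def using spectrum_real_finite_nonempty[of M]
    by (simp add: Max_le_iff)
qed

lemma mpow_mult_vec_intertwined:
  assumes "\<And>x. N *v P x = P (M *v x)"
  shows "mpow N k *v P x = P (mpow M k *v x)"
proof (induction k arbitrary: x)
  case (Suc k)
  then show ?case using assms by (simp flip: matrix_vector_mul_assoc)
qed simp

lemma spectral_radius_le_of_intertwined:
  fixes M :: "real^'a::finite^'a" and N :: "real^'b::finite^'b"
  assumes P: "linear P" and L: "linear L" and PL: "\<And>y. P (L y) = y"
    and intertwined: "\<And>x. N *v P x = P (M *v x)"
    and bound: "\<And>k. spec_norm (mpow M k) \<le> K * r ^ k" and "0 \<le> r"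
  shows "spectral_radius N \<le> r"
proof -
  obtain cP where cP: "0 < cP" "\<And>x. norm (P x) \<le> cP * norm x"
    using linear_bounded_pos[OF P] by blast
  obtain cL where cL: "0 < cL" "\<And>y. norm (L y) \<le> cL * norm y"
    using linear_bounded_pos[OF L] by blast
  have "0 \<le> K" using bound[of 0] spec_norm_nonneg[of "mpow M 0"] by simp
  have "spec_norm (mpow N k) \<le> (cP * K * cL) * r ^ k" for k
  proof (rule spec_norm_le)
    show "0 \<le> cP * K * cL * r ^ k" using cP cL \<open>0 \<le> K\<close> \<open>0 \<le> r\<close> by simp
    fix y
    have "norm (mpow N k *v y) = norm (P (mpow M k *v L y))"
      using mpow_mult_vec_intertwined[of N P M, OF intertwined, of k "L y"] by (simp add: PL)
    also have "\<dots> \<le> cP * (spec_norm (mpow M k) * (cL * norm y))"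
      using cP cL spec_norm_mult_vec_le[of "mpow M k" "L y"] spec_norm_nonneg[of "mpow M k"]
      by (meson mult_left_mono order_trans less_imp_le)
    also have "\<dots> \<le> cP * (K * r ^ k * (cL * norm y))"
      using cP cL bound[of k] by (intro mult_left_mono mult_right_mono) auto
    finally show "norm (mpow N k *v y) \<le> cP * K * cL * r ^ k * norm y"
      by (simp add: algebra_simps)
  qed
  then show ?thesis using \<open>0 \<le> r\<close> by (rule spectral_radius_le)
qed

section \<open>Perturbation of products\<close>

lemma word_prod_Nil [simp]: "word_prod A [] = mat 1"
  by (simp add: word_prod_def)

lemma word_prod_Cons [simp]: "word_prod A (i # w) = A i ** word_prod A w"
  by (simp add: word_prod_def)

lemma word_prod_append: "word_prod A (w @ v) = word_prod A w ** word_prod A v"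
  by (induction w) (auto simp: matrix_mul_assoc)

lemma word_prod_const: "word_prod (\<lambda>_. M) w = mpow M (length w)"
  by (induction w) auto

lemma matrix_add_rdistrib: "((A::'a::semiring_1^'n^'m) + B) ** C = A ** C + B ** C"
  by (vector matrix_matrix_mult_def sum.distrib[symmetric] field_simps)

text \<open>The induction carries an unperturbed prefix \<open>w\<close>: splitting the first factor as
  \<open>G\<^sub>i = M\<^sub>i + (G\<^sub>i - M\<^sub>i)\<close>, the first part joins the prefix and the second costs \<open>\<kappa> e\<close>.\<close>

lemma spec_norm_word_prod_perturbed:
  fixes M G :: "'i \<Rightarrow> real^'n::finite^'n"
  assumes M: "\<And>w. spec_norm (word_prod M w) \<le> \<kappa> * \<xi> ^ length w"
    and E: "\<And>i. spec_norm (G i - M i) \<le> e"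
    and "0 \<le> \<kappa>" and "0 \<le> \<xi>"
  shows "spec_norm (word_prod G u) \<le> \<kappa> * (\<xi> + \<kappa> * e) ^ length u"
proof -
  have "0 \<le> e" using E by (meson order_trans spec_norm_nonneg)
  have "spec_norm (word_prod M w ** word_prod G u) \<le> \<kappa> * \<xi> ^ length w * (\<xi> + \<kappa> * e) ^ length u"
    for w
  proof (induction u arbitrary: w)
    case Nil
    then show ?case using M[of w] by simp
  next
    case (Cons i u)
    let ?P = "word_prod G u"
    have expand: "word_prod M w ** word_prod G (i # u)
        = word_prod M (w @ [i]) ** ?P + word_prod M w ** ((G i - M i) ** ?P)"
    proof -
      have "G i ** ?P = M i ** ?P + (G i - M i) ** ?P"
        by (simp flip: matrix_add_rdistrib)
      then show ?thesis
        by (simp add: word_prod_append matrix_add_ldistrib matrix_mul_assoc)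
    qed
    have unperturbed: "spec_norm (word_prod M (w @ [i]) ** ?P)
        \<le> \<kappa> * \<xi> ^ length w * \<xi> * (\<xi> + \<kappa> * e) ^ length u"
      using Cons.IH[of "w @ [i]"] by (simp add: mult.assoc mult.left_commute)
    have P: "spec_norm ?P \<le> \<kappa> * (\<xi> + \<kappa> * e) ^ length u"
      using Cons.IH[of "[]"] by simp
    have "spec_norm (word_prod M w ** ((G i - M i) ** ?P))
        \<le> spec_norm (word_prod M w) * (spec_norm (G i - M i) * spec_norm ?P)"
      using spec_norm_mult_le[of "word_prod M w"] spec_norm_mult_le[of "G i - M i" ?P]
      by (meson mult_left_mono order_trans spec_norm_nonneg)
    also have "\<dots> \<le> \<kappa> * \<xi> ^ length w * (e * (\<kappa> * (\<xi> + \<kappa> * e) ^ length u))"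
      using M[of w] E[of i] P \<open>0 \<le> e\<close> \<open>0 \<le> \<kappa>\<close> \<open>0 \<le> \<xi>\<close>
      by (intro mult_mono) (auto intro: spec_norm_nonneg mult_nonneg_nonneg)
    finally have perturbed: "spec_norm (word_prod M w ** ((G i - M i) ** ?P))
        \<le> \<kappa> * \<xi> ^ length w * (e * (\<kappa> * (\<xi> + \<kappa> * e) ^ length u))" .
    have "spec_norm (word_prod M w ** word_prod G (i # u))
        \<le> \<kappa> * \<xi> ^ length w * \<xi> * (\<xi> + \<kappa> * e) ^ length u
          + \<kappa> * \<xi> ^ length w * (e * (\<kappa> * (\<xi> + \<kappa> * e) ^ length u))"
      unfolding expand using spec_norm_add_le add_mono[OF unperturbed perturbed]
      by (rule order_trans)
    also have "\<dots> = \<kappa> * \<xi> ^ length w * (\<xi> + \<kappa> * e) ^ length (i # u)"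
      by (simp add: algebra_simps)
    finally show ?case .
  qed
  from this[of "[]"] show ?thesis by simp
qed

lemma SUP_ratio_bound:
  fixes f :: "nat \<Rightarrow> real"
  assumes "\<And>k. 0 \<le> f k" and "0 \<le> \<rho>" and bound: "\<And>k. f k \<le> C * \<rho> ^ k"
  shows "f k \<le> (SUP k. f k / \<rho> ^ k) * \<rho> ^ k" and "0 \<le> (SUP k. f k / \<rho> ^ k)"
proof -
  have "f k / \<rho> ^ k \<le> max C 0" for k
  proof (cases "\<rho> ^ k = 0")
    case True
    show ?thesis unfolding True by simp
  next
    case False
    then have pos: "0 < \<rho> ^ k" using zero_le_power[OF \<open>0 \<le> \<rho>\<close>, of k] by linarith
    have "f k \<le> max C 0 * \<rho> ^ k"
      using bound[of k] mult_right_mono[of C "max C 0" "\<rho> ^ k"] pos by linarith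
    then show ?thesis by (simp add: pos_divide_le_eq[OF pos])
  qed
  then have bdd: "bdd_above (range (\<lambda>k. f k / \<rho> ^ k))"
    by (intro bdd_aboveI[where M = "max C 0"]) auto
  have le_SUP: "f k / \<rho> ^ k \<le> (SUP k. f k / \<rho> ^ k)" for k
    by (rule cSUP_upper[OF UNIV_I bdd])
  show "f k \<le> (SUP k. f k / \<rho> ^ k) * \<rho> ^ k"
  proof (cases "\<rho> ^ k = 0")
    case True
    show ?thesis using bound[of k] unfolding True by simp
  next
    case False
    then have pos: "0 < \<rho> ^ k" using zero_le_power[OF \<open>0 \<le> \<rho>\<close>, of k] by linarith
    show ?thesis using le_SUP[of k] by (simp add: pos_divide_le_eq[OF pos])
  qed
  show "0 \<le> (SUP k. f k / \<rho> ^ k)"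
    using le_SUP[of 0] assms(1)[of 0] by simp
qed

lemma spec_norm_mpow_perturbed:
  fixes M G :: "real^'n::finite^'n"
  assumes "0 \<le> \<rho>" and "\<And>k. spec_norm (mpow M k) \<le> C * \<rho> ^ k" and "spec_norm (G - M) \<le> e"
  shows "spec_norm (mpow G k) \<le> tau_const M \<rho> * (\<rho> + tau_const M \<rho> * e) ^ k"
    and "0 \<le> \<rho> + tau_const M \<rho> * e"
proof -
  note tau = SUP_ratio_bound[where f = "\<lambda>k. spec_norm (mpow M k)", OF spec_norm_nonneg assms(1,2),
      folded tau_const_def]
  have "0 \<le> e" using spec_norm_nonneg assms(3) by (rule order_trans)
  then show "0 \<le> \<rho> + tau_const M \<rho> * e" using tau(2) \<open>0 \<le> \<rho>\<close> by simp
  have "spec_norm (word_prod (\<lambda>_::unit. G) w) \<le> tau_const M \<rho> * (\<rho> + tau_const M \<rho> * e) ^ length w"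
    for w
    by (rule spec_norm_word_prod_perturbed[where M = "\<lambda>_. M"])
      (use tau assms(1,3) in \<open>simp_all add: word_prod_const\<close>)
  from this[of "replicate k ()"]
  show "spec_norm (mpow G k) \<le> tau_const M \<rho> * (\<rho> + tau_const M \<rho> * e) ^ k"
    by (simp add: word_prod_const)
qed

lemma spectral_radius_le_perturbed:
  fixes M G :: "real^'n::finite^'n"
  assumes "0 \<le> \<rho>" and "\<And>k. spec_norm (mpow M k) \<le> C * \<rho> ^ k" and "spec_norm (G - M) \<le> e"
  shows "spectral_radius G \<le> \<rho> + tau_const M \<rho> * e"
  by (rule spectral_radius_le[OF spec_norm_mpow_perturbed[OF assms]])

lemma spectral_radius_le_perturbed_intertwined:
  fixes M G :: "real^'a::finite^'a" and N :: "real^'b::finite^'b"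
  assumes "linear P" and "linear L" and "\<And>y. P (L y) = y" and "\<And>x. N *v P x = P (G *v x)"
    and "0 \<le> \<rho>" and "\<And>k. spec_norm (mpow M k) \<le> C * \<rho> ^ k" and "spec_norm (G - M) \<le> e"
  shows "spectral_radius N \<le> \<rho> + tau_const M \<rho> * e"
  by (rule spectral_radius_le_of_intertwined[OF assms(1-4) spec_norm_mpow_perturbed[OF assms(5-7)]])

section \<open>Joint spectral radius\<close>

lemma submultiplicative_iterate:
  fixes a :: "nat \<Rightarrow> real"
  assumes nonneg: "\<And>k. 0 \<le> a k" and submult: "\<And>m n. a (m + n) \<le> a m * a n"
  shows "a (q * m + r) \<le> a m ^ q * a r"
proof (induction q)
  case (Suc q)
  have "a (Suc q * m + r) = a (m + (q * m + r))" by (simp add: add.assoc)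
  also have "\<dots> \<le> a m * a (q * m + r)" by (rule submult)
  also have "\<dots> \<le> a m * (a m ^ q * a r)" by (rule mult_left_mono[OF Suc nonneg])
  finally show ?case by (simp add: mult.assoc)
qed simp

lemma submultiplicative_le_root_pow:
  fixes a :: "nat \<Rightarrow> real"
  assumes nonneg: "\<And>k. 0 \<le> a k" and submult: "\<And>m n. a (m + n) \<le> a m * a n" and "0 < m"
  obtains D where "0 < D" and "\<And>k. m \<le> k \<Longrightarrow> a k \<le> root m (a m) ^ k * D"
proof (cases "a m = 0")
  case True
  have "a k \<le> root m (a m) ^ k * 1" if "m \<le> k" for k
  proof -
    have "a k \<le> a m * a (k - m)" using submult[of m "k - m"] that by simp
    then show ?thesis using True nonneg[of k] \<open>0 < m\<close> that by simp
  qed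
  then show ?thesis using that[of 1] by simp
next
  case False
  define c where "c = root m (a m)"
  have "0 < c" using False nonneg[of m] \<open>0 < m\<close> by (simp add: c_def)
  have c_pow: "c ^ m = a m" using nonneg[of m] \<open>0 < m\<close> by (simp add: c_def)
  define D where "D = 1 + (\<Sum>r<m. a r / c ^ r)"
  have small: "a r \<le> c ^ r * D" if "r < m" for r
  proof -
    have "a r / c ^ r \<le> (\<Sum>r<m. a r / c ^ r)"
      by (rule member_le_sum) (use that nonneg \<open>0 < c\<close> in auto)
    then have "a r \<le> c ^ r * (\<Sum>r<m. a r / c ^ r)"
      using \<open>0 < c\<close> by (simp add: divide_le_eq mult.commute)
    then show ?thesis using zero_less_power[OF \<open>0 < c\<close>, of r] by (simp add: D_def distrib_left)
  qed
  have "0 < D" unfolding D_def using nonneg \<open>0 < c\<close> by (simp add: add_pos_nonneg sum_nonneg)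
  moreover have "a k \<le> c ^ k * D" if "m \<le> k" for k
  proof -
    define q where "q = k div m"
    define r where "r = k mod m"
    have k: "k = q * m + r" by (simp add: q_def r_def)
    have "a k \<le> a m ^ q * a r" unfolding k by (rule submultiplicative_iterate[OF nonneg submult])
    also have "\<dots> \<le> c ^ (m * q) * (c ^ r * D)"
      unfolding c_pow power_mult
      using small[of r] \<open>0 < m\<close> nonneg[of m] by (intro mult_left_mono) (auto simp: r_def)
    also have "\<dots> = c ^ k * D" unfolding k by (simp add: power_add mult.commute mult.left_commute)
    finally show ?thesis .
  qed
  ultimately show ?thesis using that unfolding c_def by blast
qed

lemma convergent_root_submultiplicative:
  fixes a :: "nat \<Rightarrow> real"
  assumes nonneg: "\<And>k. 0 \<le> a k" and submult: "\<And>m n. a (m + n) \<le> a m * a n"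
  shows "convergent (\<lambda>k. root k (a k))"
proof -
  define b where "b k = root k (a k)" for k
  define L where "L = Inf (b ` {1..})"
  have bdd: "bdd_below (b ` {1..})"
    unfolding b_def using nonneg by (intro bdd_belowI[where m = 0]) auto
  have L_le: "L \<le> b k" if "1 \<le> k" for k
    unfolding L_def using that by (intro cInf_lower[OF _ bdd]) auto
  have "b \<longlonglongrightarrow> L"
  proof (rule LIMSEQ_I)
    fix \<epsilon> :: real assume "0 < \<epsilon>"
    then obtain m where m: "1 \<le> m" "b m < L + \<epsilon> / 2"
      using cInf_less_iff[OF _ bdd, of "L + \<epsilon> / 2"] unfolding L_def[symmetric] by auto
    obtain D where "0 < D" and D: "\<And>k. m \<le> k \<Longrightarrow> a k \<le> b m ^ k * D"
      using submultiplicative_le_root_pow[OF nonneg submult, of m] m(1) unfolding b_def by auto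
    have "(\<lambda>k. b m * root k D) \<longlonglongrightarrow> b m * 1"
      by (intro tendsto_mult_left LIMSEQ_root_const \<open>0 < D\<close>)
    then obtain N where N: "\<And>k. N \<le> k \<Longrightarrow> b m * root k D < b m + \<epsilon> / 2"
      using \<open>0 < \<epsilon>\<close> order_tendstoD(2)[of _ "b m" sequentially "b m + \<epsilon> / 2"]
      unfolding eventually_sequentially by auto
    have "norm (b k - L) < \<epsilon>" if "max m N \<le> k" for k
    proof -
      have "0 < k" and "0 \<le> b m" using that m(1) nonneg by (auto simp: b_def)
      then have "b k \<le> root k (b m ^ k * D)"
        unfolding b_def using D[of k] that by (intro real_root_le_mono) (auto simp: b_def)
      also have "\<dots> = b m * root k D"
        using \<open>0 < k\<close> \<open>0 \<le> b m\<close> by (simp add: real_root_mult real_root_power_cancel)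
      finally show ?thesis using L_le[of k] N[of k] m that by auto
    qed
    then show "\<exists>N. \<forall>k\<ge>N. norm (b k - L) < \<epsilon>" by blast
  qed
  then show ?thesis unfolding convergent_def b_def by blast
qed

lemma finite_words: "finite {w::'m::finite list. length w = k}"
  using finite_lists_length_eq[of "UNIV::'m set" k] by simp

lemma spec_norm_le_max_prod_norm:
  "length w = k \<Longrightarrow> spec_norm (word_prod (A::'m::finite \<Rightarrow> real^'n::finite^'n) w) \<le> max_prod_norm A k"
  unfolding max_prod_norm_def by (rule Max_ge) (auto simp: finite_words)

lemma max_prod_norm_le:
  assumes "\<And>w. length w = k \<Longrightarrow> spec_norm (word_prod (A::'m::finite \<Rightarrow> real^'n::finite^'n) w) \<le> b"
  shows "max_prod_norm A k \<le> b"
proof -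
  have "{w::'m list. length w = k} \<noteq> {}"
    by (metis (mono_tags) empty_iff length_replicate mem_Collect_eq)
  then show ?thesis
    unfolding max_prod_norm_def using assms finite_words[of k] by (subst Max_le_iff) auto
qed

lemma max_prod_norm_nonneg: "0 \<le> max_prod_norm (A::'m::finite \<Rightarrow> real^'n::finite^'n) k"
  by (rule order_trans[OF spec_norm_nonneg spec_norm_le_max_prod_norm[OF length_replicate]])

lemma max_prod_norm_submult:
  fixes A :: "'m::finite \<Rightarrow> real^'n::finite^'n"
  shows "max_prod_norm A (m + n) \<le> max_prod_norm A m * max_prod_norm A n"
proof (rule max_prod_norm_le)
  fix w :: "'m list" assume w: "length w = m + n"
  have "word_prod A w = word_prod A (take m w) ** word_prod A (drop m w)"
    by (metis append_take_drop_id word_prod_append)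
  then have "spec_norm (word_prod A w)
      \<le> spec_norm (word_prod A (take m w)) * spec_norm (word_prod A (drop m w))"
    by (metis spec_norm_mult_le)
  also have "\<dots> \<le> max_prod_norm A m * max_prod_norm A n"
    using w
    by (intro mult_mono spec_norm_le_max_prod_norm spec_norm_nonneg max_prod_norm_nonneg) auto
  finally show "spec_norm (word_prod A w) \<le> max_prod_norm A m * max_prod_norm A n" .
qed

lemma jsr_LIMSEQ: "(\<lambda>k. root k (max_prod_norm (A::'m::finite \<Rightarrow> real^'n::finite^'n) k)) \<longlonglongrightarrow> jsr A"
  using convergent_root_submultiplicative[where a = "max_prod_norm A",
      OF max_prod_norm_nonneg max_prod_norm_submult]
  unfolding jsr_def by (simp add: convergent_LIMSEQ_iff)

lemma jsr_nonneg: "0 \<le> jsr (A::'m::finite \<Rightarrow> real^'n::finite^'n)"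
  by (rule LIMSEQ_le_const[OF jsr_LIMSEQ]) (auto intro: real_root_ge_zero max_prod_norm_nonneg)

lemma jsr_le:
  fixes A :: "'m::finite \<Rightarrow> real^'n::finite^'n"
  assumes bound: "\<And>k. max_prod_norm A k \<le> K * r ^ k" and "0 \<le> r" and "0 \<le> K"
  shows "jsr A \<le> r"
proof -
  have "(\<lambda>k. root k (K + 1) * r) \<longlonglongrightarrow> 1 * r"
    by (intro tendsto_mult_right LIMSEQ_root_const) (use \<open>0 \<le> K\<close> in simp)
  moreover have "root k (max_prod_norm A k) \<le> root k (K + 1) * r" if "1 \<le> k" for k
  proof -
    have "max_prod_norm A k \<le> (K + 1) * r ^ k"
      using bound[of k] zero_le_power[OF \<open>0 \<le> r\<close>, of k] by (simp add: algebra_simps)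
    then have "root k (max_prod_norm A k) \<le> root k ((K + 1) * r ^ k)"
      using that by (intro real_root_le_mono) auto
    also have "\<dots> = root k (K + 1) * r"
      using that \<open>0 \<le> r\<close> by (simp add: real_root_mult real_root_power_cancel)
    finally show ?thesis .
  qed
  ultimately show ?thesis using LIMSEQ_le[OF jsr_LIMSEQ] by fastforce
qed

lemma word_prod_comp: "word_prod (\<lambda>i. A (f i)) w = word_prod A (map f w)"
  by (induction w) simp_all

lemma max_prod_norm_comp_surj:
  fixes A :: "'m::finite \<Rightarrow> real^'n::finite^'n" and f :: "'s::finite \<Rightarrow> 'm"
  assumes "surj f"
  shows "max_prod_norm (\<lambda>i. A (f i)) k = max_prod_norm A k"
proof (rule antisym)
  show "max_prod_norm (\<lambda>i. A (f i)) k \<le> max_prod_norm A k"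
    by (rule max_prod_norm_le) (simp add: word_prod_comp spec_norm_le_max_prod_norm)
  show "max_prod_norm A k \<le> max_prod_norm (\<lambda>i. A (f i)) k"
  proof (rule max_prod_norm_le)
    fix w :: "'m list" assume "length w = k"
    moreover have "map f (map (inv_into UNIV f) w) = w"
      by (simp add: surj_f_inv_f[OF assms] map_idI)
    ultimately show "spec_norm (word_prod A w) \<le> max_prod_norm (\<lambda>i. A (f i)) k"
      using spec_norm_le_max_prod_norm[of "map (inv_into UNIV f) w" k "\<lambda>i. A (f i)"]
      by (simp add: word_prod_comp)
  qed
qed

lemma jsr_comp_surj: "surj f \<Longrightarrow> jsr (\<lambda>i. A (f i)) = jsr A"
  unfolding jsr_def by (simp add: max_prod_norm_comp_surj)

lemma max_prod_norm_perturbed: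
  fixes M G :: "'m::finite \<Rightarrow> real^'n::finite^'n"
  assumes "0 \<le> \<xi>" and "\<And>k. max_prod_norm M k \<le> C * \<xi> ^ k" and "\<And>i. spec_norm (G i - M i) \<le> e"
  shows "max_prod_norm G k \<le> kappa_const M \<xi> * (\<xi> + kappa_const M \<xi> * e) ^ k"
    and "0 \<le> kappa_const M \<xi>"
proof -
  note kappa = SUP_ratio_bound[where f = "max_prod_norm M", OF max_prod_norm_nonneg assms(1,2),
      folded kappa_const_def]
  show "0 \<le> kappa_const M \<xi>" by (rule kappa(2))
  have "spec_norm (word_prod M w) \<le> kappa_const M \<xi> * \<xi> ^ length w" for w
    using spec_norm_le_max_prod_norm[of w] kappa(1)[of "length w"] by (meson order_trans)
  then have "spec_norm (word_prod G w) \<le> kappa_const M \<xi> * (\<xi> + kappa_const M \<xi> * e) ^ length w"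
    for w by (rule spec_norm_word_prod_perturbed[where M = M, OF _ assms(3) kappa(2) assms(1)])
  then show "max_prod_norm G k \<le> kappa_const M \<xi> * (\<xi> + kappa_const M \<xi> * e) ^ k"
    by (intro max_prod_norm_le) auto
qed

lemma jsr_le_perturbed:
  fixes M G :: "'m::finite \<Rightarrow> real^'n::finite^'n"
  assumes "0 \<le> \<xi>" and "\<And>k. max_prod_norm M k \<le> C * \<xi> ^ k" and "\<And>i. spec_norm (G i - M i) \<le> e"
  shows "jsr G \<le> \<xi> + kappa_const M \<xi> * e"
proof (rule jsr_le)
  show "max_prod_norm G k \<le> kappa_const M \<xi> * (\<xi> + kappa_const M \<xi> * e) ^ k" for k
    by (rule max_prod_norm_perturbed(1)[OF assms])
  have "0 \<le> e" using assms(3) by (meson order_trans spec_norm_nonneg)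
  then show "0 \<le> \<xi> + kappa_const M \<xi> * e"
    using max_prod_norm_perturbed(2)[OF assms] \<open>0 \<le> \<xi>\<close> by simp
  show "0 \<le> kappa_const M \<xi>" by (rule max_prod_norm_perturbed(2)[OF assms])
qed

section \<open>Kronecker products and block matrices\<close>

lemma sum_UNIV_prod:
  "(\<Sum>p\<in>(UNIV::('a::finite \<times> 'b::finite) set). f p) = (\<Sum>a\<in>UNIV. \<Sum>b\<in>UNIV. f (a, b))"
  by (subst UNIV_Times_UNIV[symmetric]) (simp add: sum.cartesian_product)

definition vec_block :: "real^('s::finite \<times> 'm::finite) \<Rightarrow> 's \<Rightarrow> real^'m" where
  "vec_block x j = (\<chi> b. x $ (j, b))"

lemma norm_squared_vec_block: "(norm x)\<^sup>2 = (\<Sum>j\<in>UNIV. (norm (vec_block x j))\<^sup>2)"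
  unfolding norm_real_vec_squared sum_UNIV_prod vec_block_def by simp

lemma kron_mult_vec_component:
  "(kron X Y *v z) $ (a1, a2) = (X *v (\<chi> b1. (Y *v vec_block z b1) $ a2)) $ a1"
  by (simp add: kron_def vec_block_def matrix_vector_mult_def sum_UNIV_prod sum_distrib_left
      mult.assoc)

text \<open>\<open>kron X Y\<close> acts on \<open>z\<close>, viewed as an \<open>n \<times> n\<close> array, as \<open>z \<mapsto> X z Y\<^sup>T\<close>.\<close>

lemma spec_norm_kron_le:
  fixes X Y :: "real^'n::finite^'n"
  shows "spec_norm (kron X Y) \<le> spec_norm X * spec_norm Y"
proof (rule spec_norm_le)
  show "0 \<le> spec_norm X * spec_norm Y" by (simp add: spec_norm_nonneg)
  fix z :: "real^('n \<times> 'n)"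
  define W where "W b1 = Y *v vec_block z b1" for b1
  define col where "col a2 = (\<chi> b1. W b1 $ a2)" for a2
  have swap: "(\<Sum>a2\<in>UNIV. \<Sum>b1\<in>UNIV. (W b1 $ a2)\<^sup>2) = (\<Sum>b1\<in>UNIV. (norm (W b1))\<^sup>2)"
    unfolding norm_real_vec_squared by (rule sum.swap)
  have "(norm (kron X Y *v z))\<^sup>2 = (\<Sum>a2\<in>UNIV. (norm (X *v col a2))\<^sup>2)"
    unfolding norm_real_vec_squared sum_UNIV_prod kron_mult_vec_component col_def W_def
    by (rule sum.swap)
  also have "\<dots> \<le> (\<Sum>a2\<in>UNIV. (spec_norm X * norm (col a2))\<^sup>2)"
    by (intro sum_mono power_mono spec_norm_mult_vec_le) auto
  also have "\<dots> = (spec_norm X)\<^sup>2 * (\<Sum>b1\<in>UNIV. (norm (W b1))\<^sup>2)"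
    unfolding power_mult_distrib sum_distrib_left[symmetric] swap[symmetric] col_def
    by (simp add: norm_real_vec_squared)
  also have "\<dots> \<le> (spec_norm X)\<^sup>2 * (\<Sum>b1\<in>UNIV. (spec_norm Y * norm (vec_block z b1))\<^sup>2)"
    unfolding W_def by (intro mult_left_mono sum_mono power_mono spec_norm_mult_vec_le) auto
  also have "\<dots> = (spec_norm X * spec_norm Y * norm z)\<^sup>2"
    unfolding power_mult_distrib sum_distrib_left[symmetric] norm_squared_vec_block[of z] by simp
  finally show "norm (kron X Y *v z) \<le> spec_norm X * spec_norm Y * norm z"
    by (simp add: power2_le_iff_abs_le spec_norm_nonneg)
qed

lemma kron_diff: "kron X X - kron Y Y = kron (X - Y) X + kron Y (X - Y)"
  by (simp add: kron_def Finite_Cartesian_Product.vec_eq_iff algebra_simps)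

lemma spec_norm_kron_diff_le:
  fixes X Y :: "real^'n::finite^'n"
  assumes "spec_norm (X - Y) \<le> e" and "spec_norm Y \<le> a" and "spec_norm X \<le> a"
  shows "spec_norm (kron X X - kron Y Y) \<le> 2 * a * e"
proof -
  have "spec_norm (kron X X - kron Y Y) \<le> spec_norm (kron (X - Y) X) + spec_norm (kron Y (X - Y))"
    unfolding kron_diff by (rule spec_norm_add_le)
  also have "\<dots> \<le> spec_norm (X - Y) * spec_norm X + spec_norm Y * spec_norm (X - Y)"
    by (intro add_mono spec_norm_kron_le)
  also have "\<dots> \<le> e * a + a * e"
    using assms by (intro add_mono mult_mono) (auto intro: spec_norm_nonneg order_trans)
  finally show ?thesis by simp
qed

text \<open>The block matrix whose \<open>(i, j)\<close>-th block is \<open>W(j, i) K\<^sub>j\<close>.\<close>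

definition blockmat :: "('s::finite \<Rightarrow> 's \<Rightarrow> real) \<Rightarrow> ('s \<Rightarrow> real^'m::finite^'m)
    \<Rightarrow> real^('s \<times> 'm)^('s \<times> 'm)" where
  "blockmat W K = (\<chi> x y. W (fst y) (fst x) * K (fst y) $ snd x $ snd y)"

lemma aug_eq_blockmat: "aug T A = blockmat T (\<lambda>j. kron (A j) (A j))"
  unfolding aug_def blockmat_def ..

lemma vec_block_blockmat_mult_vec:
  "vec_block (blockmat W K *v x) i = (\<Sum>j\<in>UNIV. W j i *\<^sub>R (K j *v vec_block x j))"
  by (simp add: blockmat_def vec_block_def Finite_Cartesian_Product.vec_eq_iff
      matrix_vector_mult_def sum_UNIV_prod sum_distrib_left mult.assoc sum_component)

lemma spec_norm_blockmat_le:
  fixes W :: "'s::finite \<Rightarrow> 's \<Rightarrow> real" and K :: "'s \<Rightarrow> real^'m::finite^'m"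
  assumes K: "\<And>j. spec_norm (K j) \<le> c"
  shows "spec_norm (blockmat W K) \<le> frob_norm_fun W * c"
proof (rule spec_norm_le)
  have "0 \<le> c" using K spec_norm_nonneg order_trans by metis
  then show "0 \<le> frob_norm_fun W * c" by (simp add: frob_norm_fun_def sum_nonneg)
  fix x :: "real^('s \<times> 'm)"
  define a where "a j = norm (vec_block x j)" for j
  have K_mult: "norm (K j *v y) \<le> c * norm y" for j y
    using spec_norm_mult_vec_le[of "K j" y] K[of j]
    by (meson mult_right_mono norm_ge_zero order_trans)
  have block: "norm (vec_block (blockmat W K *v x) i) \<le> c * (\<Sum>j\<in>UNIV. \<bar>W j i\<bar> * a j)" for i
  proof -
    have "norm (vec_block (blockmat W K *v x) i) \<le> (\<Sum>j\<in>UNIV. \<bar>W j i\<bar> * norm (K j *v vec_block x j))"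
      unfolding vec_block_blockmat_mult_vec
      using norm_sum[of "\<lambda>j. W j i *\<^sub>R (K j *v vec_block x j)" UNIV] by simp
    also have "\<dots> \<le> (\<Sum>j\<in>UNIV. \<bar>W j i\<bar> * (c * a j))"
      unfolding a_def by (intro sum_mono mult_left_mono K_mult) simp
    finally show ?thesis by (simp add: sum_distrib_left mult.left_commute)
  qed
  have "(norm (blockmat W K *v x))\<^sup>2 \<le> (\<Sum>i\<in>UNIV. (c * (\<Sum>j\<in>UNIV. \<bar>W j i\<bar> * a j))\<^sup>2)"
    unfolding norm_squared_vec_block[of "blockmat W K *v x"]
    by (intro sum_mono power_mono block) auto
  also have "\<dots> \<le> (\<Sum>i\<in>UNIV. c\<^sup>2 * ((\<Sum>j\<in>UNIV. (W j i)\<^sup>2) * (\<Sum>j\<in>UNIV. (a j)\<^sup>2)))"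
    using Cauchy_Schwarz_ineq_sum[of "\<lambda>j. \<bar>W j _\<bar>" a UNIV]
    unfolding power_mult_distrib by (intro sum_mono mult_left_mono) auto
  also have "\<dots> = c\<^sup>2 * (\<Sum>i\<in>UNIV. \<Sum>j\<in>UNIV. (W j i)\<^sup>2) * (\<Sum>j\<in>UNIV. (a j)\<^sup>2)"
    by (simp only: sum_distrib_left[symmetric] sum_distrib_right[symmetric] mult.assoc)
  also have "(\<Sum>i\<in>UNIV. \<Sum>j\<in>UNIV. (W j i)\<^sup>2) = (frob_norm_fun W)\<^sup>2"
    unfolding frob_norm_fun_def using sum.swap[of "\<lambda>j i. (W j i)\<^sup>2" UNIV UNIV]
    by (simp add: sum_nonneg)
  also have "(\<Sum>j\<in>UNIV. (a j)\<^sup>2) = (norm x)\<^sup>2"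
    unfolding norm_squared_vec_block[of x] a_def ..
  finally have "(norm (blockmat W K *v x))\<^sup>2 \<le> (frob_norm_fun W * c * norm x)\<^sup>2"
    by (simp add: power_mult_distrib mult.commute)
  then show "norm (blockmat W K *v x) \<le> frob_norm_fun W * c * norm x"
    using \<open>0 \<le> c\<close> by (simp add: power2_le_iff_abs_le frob_norm_fun_def sum_nonneg)
qed

lemma frob_norm_fun_markov_le:
  fixes W :: "'s::finite \<Rightarrow> 's \<Rightarrow> real"
  assumes "markov W"
  shows "frob_norm_fun W \<le> sqrt (real CARD('s))"
proof -
  have "W i j \<le> 1" for i j
    using assms member_le_sum[of j UNIV "W i"] unfolding markov_def by auto
  then have "(\<Sum>i\<in>UNIV. \<Sum>j\<in>UNIV. (W i j)\<^sup>2) \<le> (\<Sum>i\<in>UNIV. \<Sum>j\<in>UNIV. W i j)"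
    using assms unfolding markov_def power2_eq_square
    by (intro sum_mono) (simp add: mult_left_le)
  then show ?thesis
    using assms unfolding frob_norm_fun_def markov_def by simp
qed

lemma spec_norm_aug_diff_le:
  fixes A A' :: "'s::finite \<Rightarrow> real^'n::finite^'n" and T T' :: "'s \<Rightarrow> 's \<Rightarrow> real"
  assumes "markov T'"
    and diff: "\<And>j. spec_norm (A' j - A j) \<le> e"
    and A: "\<And>j. spec_norm (A j) \<le> a" and A': "\<And>j. spec_norm (A' j) \<le> a"
    and T_diff: "frob_norm_fun (\<lambda>i j. T' i j - T i j) \<le> t"
  shows "spec_norm (aug T' A' - aug T A) \<le> sqrt (real CARD('s)) * ((2 * a + e) * e + a\<^sup>2 * t)"
proof -
  let ?s = "sqrt (real CARD('s))"
  have "0 \<le> e" using spec_norm_nonneg diff[of undefined] by (rule order_trans)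
  have "0 \<le> a" using spec_norm_nonneg A[of undefined] by (rule order_trans)
  have "0 \<le> t"
    using T_diff unfolding frob_norm_fun_def
    by (meson order_trans real_sqrt_ge_zero sum_nonneg zero_le_power2)
  have split: "aug T' A' - aug T A = blockmat T' (\<lambda>j. kron (A' j) (A' j) - kron (A j) (A j))
      + blockmat (\<lambda>i j. T' i j - T i j) (\<lambda>j. kron (A j) (A j))"
    unfolding aug_eq_blockmat blockmat_def
    by (simp add: Finite_Cartesian_Product.vec_eq_iff algebra_simps)
  have "spec_norm (kron (A' j) (A' j) - kron (A j) (A j)) \<le> 2 * a * e" for j
    using diff A A' by (rule spec_norm_kron_diff_le)
  then have "spec_norm (blockmat T' (\<lambda>j. kron (A' j) (A' j) - kron (A j) (A j)))
      \<le> frob_norm_fun T' * (2 * a * e)"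
    by (rule spec_norm_blockmat_le)
  also have "\<dots> \<le> ?s * (2 * a * e)"
    using frob_norm_fun_markov_le[OF \<open>markov T'\<close>] \<open>0 \<le> e\<close> \<open>0 \<le> a\<close> by (intro mult_right_mono) auto
  finally have modes_diff:
    "spec_norm (blockmat T' (\<lambda>j. kron (A' j) (A' j) - kron (A j) (A j))) \<le> ?s * (2 * a * e)" .
  have "spec_norm (kron (A j) (A j)) \<le> a * a" for j
    using spec_norm_kron_le[of "A j" "A j"] A[of j] \<open>0 \<le> a\<close>
    by (meson mult_mono order_trans spec_norm_nonneg)
  then have "spec_norm (blockmat (\<lambda>i j. T' i j - T i j) (\<lambda>j. kron (A j) (A j)))
      \<le> frob_norm_fun (\<lambda>i j. T' i j - T i j) * (a * a)"
    by (rule spec_norm_blockmat_le)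
  also have "\<dots> \<le> t * (a * a)"
    using T_diff \<open>0 \<le> a\<close> by (intro mult_right_mono) auto
  also have "\<dots> \<le> ?s * (a\<^sup>2 * t)"
    using mult_right_mono[of 1 ?s "a\<^sup>2 * t"] \<open>0 \<le> t\<close> by (simp add: power2_eq_square mult.commute)
  finally have transitions_diff:
    "spec_norm (blockmat (\<lambda>i j. T' i j - T i j) (\<lambda>j. kron (A j) (A j))) \<le> ?s * (a\<^sup>2 * t)" .
  have "spec_norm (aug T' A' - aug T A) \<le> ?s * (2 * a * e) + ?s * (a\<^sup>2 * t)"
    unfolding split using spec_norm_add_le add_mono[OF modes_diff transitions_diff]
    by (rule order_trans)
  also have "\<dots> \<le> ?s * ((2 * a + e) * e + a\<^sup>2 * t)"
    using \<open>0 \<le> e\<close> by (simp add: algebra_simps)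
  finally show ?thesis .
qed

section \<open>Reduction along a partition\<close>

lemma spec_norm_zero [simp]: "spec_norm (0::real^'m::finite^'k::finite) = 0"
proof -
  have "(*v) (0::real^'m^'k) = (\<lambda>x. 0)" by auto
  then show ?thesis unfolding spec_norm_def by (simp add: onorm_zero)
qed

lemma spec_norm_scaleR: "spec_norm (c *\<^sub>R (M::real^'m::finite^'k::finite)) = \<bar>c\<bar> * spec_norm M"
proof -
  have "(*v) (c *\<^sub>R M) = (\<lambda>x. c *\<^sub>R (M *v x))" by (simp add: fun_eq_iff scaleR_matrix_vector_assoc)
  then show ?thesis
    unfolding spec_norm_def by (simp add: onorm_scaleR[OF matrix_vector_mul_bounded_linear])
qed

lemma spec_norm_sum_le:
  "spec_norm (\<Sum>i\<in>S. (M i::real^'m::finite^'k::finite)) \<le> (\<Sum>i\<in>S. spec_norm (M i))"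
  by (induction S rule: infinite_finite_induct) (auto intro: order_trans[OF spec_norm_add_le])

lemma sum_over_clusters:
  fixes cl :: "'s::finite \<Rightarrow> 'r::finite"
  shows "(\<Sum>k\<in>UNIV. \<Sum>j\<in>cluster cl k. f j) = (\<Sum>j\<in>UNIV. f j)"
  unfolding cluster_def using sum.group[of UNIV UNIV cl f] by simp

lemma spec_norm_red_mat_le:
  fixes A :: "'s::finite \<Rightarrow> real^'m::finite^'k::finite"
  assumes A: "\<And>i. spec_norm (A i) \<le> a"
  shows "spec_norm (red_mat A cl l) \<le> a"
proof -
  let ?c = "real (card (cluster cl l))"
  have "0 \<le> a" using spec_norm_nonneg A[of undefined] by (rule order_trans)
  have "spec_norm (red_mat A cl l) \<le> (1 / ?c) * (\<Sum>i\<in>cluster cl l. spec_norm (A i))"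
    unfolding red_mat_def spec_norm_scaleR by (simp add: divide_right_mono spec_norm_sum_le)
  also have "\<dots> \<le> (1 / ?c) * (?c * a)"
    using sum_mono[of "cluster cl l" "\<lambda>i. spec_norm (A i)" "\<lambda>_. a"] A by (intro mult_left_mono) auto
  also have "\<dots> \<le> a" using \<open>0 \<le> a\<close> by (cases "?c = 0") auto
  finally show ?thesis .
qed

lemma spec_norm_red_mat_diff_le:
  fixes A :: "'s::finite \<Rightarrow> real^'m::finite^'k::finite" and cl :: "'s \<Rightarrow> 'r::finite"
  shows "spec_norm (red_mat A cl (cl j) - A j)
    \<le> (\<Sum>k\<in>UNIV. \<Sum>i\<in>cluster cl k. \<Sum>i'\<in>cluster cl k. frob_norm (A i - A i'))"
proof -
  let ?\<Omega> = "cluster cl (cl j)"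
  let ?c = "real (card ?\<Omega>)"
  have "j \<in> ?\<Omega>" by (simp add: cluster_def)
  then have "0 < card ?\<Omega>" by (auto simp: card_gt_0_iff)
  then have "1 \<le> ?c" by simp
  have "(\<Sum>i\<in>?\<Omega>. A i - A j) = (\<Sum>i\<in>?\<Omega>. A i) - ?c *\<^sub>R A j"
    unfolding sum_subtractf sum_constant_scaleR ..
  then have "red_mat A cl (cl j) - A j = (1 / ?c) *\<^sub>R (\<Sum>i\<in>?\<Omega>. A i - A j)"
    using \<open>j \<in> ?\<Omega>\<close> \<open>0 < card ?\<Omega>\<close> by (auto simp: red_mat_def scaleR_diff_right)
  then have "norm (red_mat A cl (cl j) - A j) \<le> (1 / ?c) * (\<Sum>i\<in>?\<Omega>. norm (A i - A j))"
    using \<open>1 \<le> ?c\<close> by (simp add: norm_sum divide_right_mono)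
  also have "\<dots> \<le> (\<Sum>i\<in>?\<Omega>. norm (A i - A j))"
    using \<open>1 \<le> ?c\<close> mult_right_mono[of "1 / ?c" 1 "\<Sum>i\<in>?\<Omega>. norm (A i - A j)"]
    by (simp add: sum_nonneg)
  also have "\<dots> \<le> (\<Sum>i\<in>?\<Omega>. \<Sum>i'\<in>?\<Omega>. frob_norm (A i - A i'))"
    unfolding frob_norm_eq_norm
    by (intro sum_mono member_le_sum[OF \<open>j \<in> ?\<Omega>\<close>]) auto
  also have "\<dots> \<le> (\<Sum>k\<in>UNIV. \<Sum>i\<in>cluster cl k. \<Sum>i'\<in>cluster cl k. frob_norm (A i - A i'))"
    by (rule member_le_sum[where f = "\<lambda>k. \<Sum>i\<in>cluster cl k. \<Sum>i'\<in>cluster cl k. frob_norm (A i - A i')"])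
      (auto intro!: sum_nonneg simp: frob_norm_eq_norm)
  finally have "norm (red_mat A cl (cl j) - A j)
      \<le> (\<Sum>k\<in>UNIV. \<Sum>i\<in>cluster cl k. \<Sum>i'\<in>cluster cl k. frob_norm (A i - A i'))" .
  with spec_norm_le_norm show ?thesis by (rule order_trans)
qed

definition aggregate :: "('s::finite \<Rightarrow> 'r::finite) \<Rightarrow> real^('s \<times> 'm::finite) \<Rightarrow> real^('r \<times> 'm)" where
  "aggregate cl x = (\<chi> p. \<Sum>i\<in>cluster cl (fst p). x $ (i, snd p))"

definition spread :: "('s::finite \<Rightarrow> 'r::finite) \<Rightarrow> real^('r \<times> 'm::finite) \<Rightarrow> real^('s \<times> 'm)" where
  "spread cl y = (\<chi> p. y $ (cl (fst p), snd p) / real (card (cluster cl (cl (fst p)))))"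

lemma linear_aggregate: "linear (aggregate cl)"
  by (intro linearI)
    (simp_all add: aggregate_def Finite_Cartesian_Product.vec_eq_iff sum.distrib sum_distrib_left)

lemma linear_spread: "linear (spread cl)"
  by (intro linearI)
    (simp_all add: spread_def Finite_Cartesian_Product.vec_eq_iff add_divide_distrib)

lemma aggregate_spread:
  assumes "surj cl"
  shows "aggregate cl (spread cl y) = y"
proof -
  have "aggregate cl (spread cl y) $ (l, a) = y $ (l, a)" for l a
  proof -
    have "cluster cl l \<noteq> {}" using surjD[OF assms, of l] by (auto simp: cluster_def)
    have "aggregate cl (spread cl y) $ (l, a)
        = (\<Sum>i\<in>cluster cl l. y $ (l, a) / real (card (cluster cl l)))"
      unfolding aggregate_def spread_def by (simp add: cluster_def cong: sum.cong_simp)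
    also have "\<dots> = y $ (l, a)" using \<open>cluster cl l \<noteq> {}\<close> by simp
    finally show ?thesis .
  qed
  then show ?thesis by (simp add: Finite_Cartesian_Product.vec_eq_iff)
qed

text \<open>The hypothesis is the exact lumpability of \<open>W'\<close> along the partition, with lumped chain \<open>W\<close>.\<close>

lemma blockmat_aggregate:
  fixes cl :: "'s::finite \<Rightarrow> 'r::finite" and K :: "'r \<Rightarrow> real^'m::finite^'m"
  assumes lump: "\<And>i l. (\<Sum>j\<in>cluster cl l. W' i j) = W (cl i) l"
  shows "blockmat W K *v aggregate cl x = aggregate cl (blockmat W' (\<lambda>i. K (cl i)) *v x)"
proof -
  have "(blockmat W K *v aggregate cl x) $ (l, a)
      = aggregate cl (blockmat W' (\<lambda>i. K (cl i)) *v x) $ (l, a)" for l a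
  proof -
    define F where "F j = (\<Sum>b\<in>UNIV. W (cl j) l * K (cl j) $ a $ b * x $ (j, b))" for j
    have "(blockmat W K *v aggregate cl x) $ (l, a)
        = (\<Sum>k\<in>UNIV. \<Sum>b\<in>UNIV. \<Sum>j\<in>cluster cl k. W k l * K k $ a $ b * x $ (j, b))"
      by (simp add: matrix_vector_mult_def sum_UNIV_prod blockmat_def aggregate_def sum_distrib_left)
    also have "\<dots> = (\<Sum>k\<in>UNIV. \<Sum>j\<in>cluster cl k. F j)"
      unfolding F_def by (intro sum.cong refl trans[OF sum.swap]) (auto simp: cluster_def)
    also have "\<dots> = (\<Sum>j\<in>UNIV. F j)" by (rule sum_over_clusters)
    finally have lhs: "(blockmat W K *v aggregate cl x) $ (l, a) = (\<Sum>j\<in>UNIV. F j)" .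
    have "aggregate cl (blockmat W' (\<lambda>i. K (cl i)) *v x) $ (l, a)
        = (\<Sum>i\<in>cluster cl l. \<Sum>j\<in>UNIV. \<Sum>b\<in>UNIV. W' j i * K (cl j) $ a $ b * x $ (j, b))"
      by (simp add: matrix_vector_mult_def sum_UNIV_prod blockmat_def aggregate_def)
    also have "\<dots> = (\<Sum>j\<in>UNIV. \<Sum>b\<in>UNIV. \<Sum>i\<in>cluster cl l. W' j i * K (cl j) $ a $ b * x $ (j, b))"
      by (subst sum.swap) (intro sum.cong refl sum.swap)
    also have "\<dots> = (\<Sum>j\<in>UNIV. F j)"
      unfolding F_def by (simp add: lump flip: sum_distrib_right)
    finally show ?thesis using lhs by simp
  qed
  then show ?thesis by (simp add: Finite_Cartesian_Product.vec_eq_iff)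
qed

theorem theorem5:
  fixes A :: "'s::finite \<Rightarrow> real^'n::finite^'n"
    and B :: "'s \<Rightarrow> real^'p::finite^'n"
    and T :: "'s \<Rightarrow> 's \<Rightarrow> real"
    and cl :: "'s \<Rightarrow> 'r::finite"
    and Tbar :: "'s \<Rightarrow> 's \<Rightarrow> real"
    and \<epsilon>A \<epsilon>B \<epsilon>T :: real
  assumes erg: "ergodic T"
    and part: "surj cl"
    and epsA: "(\<Sum>k\<in>UNIV. \<Sum>i\<in>cluster cl k. \<Sum>i'\<in>cluster cl k. frob_norm (A i - A i')) \<le> \<epsilon>A"
    and epsB: "(\<Sum>k\<in>UNIV. \<Sum>i\<in>cluster cl k. \<Sum>i'\<in>cluster cl k. frob_norm (B i - B i')) \<le> \<epsilon>B"
    and epsT: "approx_lumpable T cl \<epsilon>T \<or> approx_aggregatable T cl \<epsilon>T"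
    and Tbar_markov: "markov Tbar"
    and Tbar_inf: "inf_norm (\<lambda>i j. Tbar i j - T i j) \<le> \<epsilon>T"
    and Tbar_frob: "frob_norm_fun (\<lambda>i j. Tbar i j - T i j) \<le> \<epsilon>T"
    and Tbar_lump: "\<forall>i l. (\<Sum>j\<in>cluster cl l. Tbar i j) = red_T T cl (cl i) l"
  defines "Ahat \<equiv> red_mat A cl"
    and "Abar \<equiv> (\<lambda>i. red_mat A cl (cl i))"
    and "\<AA> \<equiv> aug T A"
    and "\<AA>hat \<equiv> aug (red_T T cl) (red_mat A cl)"
    and "\<AA>bar \<equiv> aug Tbar (\<lambda>i. red_mat A cl (cl i))"
    and "\<epsilon>\<rho> \<equiv> sqrt (real CARD('s)) * ((2 * Max ((\<lambda>i. spec_norm (A i)) ` UNIV) + \<epsilon>A) * \<epsilon>A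
          + (Max ((\<lambda>i. spec_norm (A i)) ` UNIV))\<^sup>2 * \<epsilon>T)"
  shows
    "(\<forall>\<rho>. \<rho> \<ge> spectral_radius \<AA> \<and> (\<exists>C. \<forall>k. spec_norm (mpow \<AA> k) \<le> C * \<rho> ^ k)
        \<longrightarrow> spectral_radius \<AA>hat - spectral_radius \<AA>
              \<le> tau_const \<AA> \<rho> * \<epsilon>\<rho> + (\<rho> - spectral_radius \<AA>))
   \<and> (\<forall>\<rho>hat. \<rho>hat \<ge> spectral_radius \<AA>hat \<and> (\<exists>C. \<forall>k. spec_norm (mpow \<AA>bar k) \<le> C * \<rho>hat ^ k)
        \<longrightarrow> spectral_radius \<AA> - spectral_radius \<AA>hat
              \<le> tau_const \<AA>bar \<rho>hat * \<epsilon>\<rho> + (\<rho>hat - spectral_radius \<AA>hat))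
   \<and> (\<forall>\<xi>. \<xi> \<ge> jsr A \<and> (\<exists>C. \<forall>k. max_prod_norm A k \<le> C * \<xi> ^ k)
        \<longrightarrow> jsr Ahat - jsr A \<le> kappa_const A \<xi> * \<epsilon>A + (\<xi> - jsr A))
   \<and> (\<forall>\<xi>hat. \<xi>hat \<ge> jsr Ahat \<and> (\<exists>C. \<forall>k. max_prod_norm Abar k \<le> C * \<xi>hat ^ k)
        \<longrightarrow> jsr A - jsr Ahat \<le> kappa_const Abar \<xi>hat * \<epsilon>A + (\<xi>hat - jsr Ahat))"
proof -
  have Abar_diff: "spec_norm (Abar i - A i) \<le> \<epsilon>A" for i
    unfolding Abar_def using spec_norm_red_mat_diff_le[of A cl i] epsA by linarith
  have A_diff: "spec_norm (A i - Abar i) \<le> \<epsilon>A" for i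
    using Abar_diff[of i] spec_norm_minus_commute[of "A i" "Abar i"] by linarith
  have \<AA>bar_diff: "spec_norm (\<AA>bar - \<AA>) \<le> \<epsilon>\<rho>"
    unfolding \<AA>bar_def \<AA>_def \<epsilon>\<rho>_def
    by (rule spec_norm_aug_diff_le[OF Tbar_markov Abar_diff[unfolded Abar_def] _ _ Tbar_frob])
      (auto intro: Max_ge spec_norm_red_mat_le)
  then have \<AA>_diff: "spec_norm (\<AA> - \<AA>bar) \<le> \<epsilon>\<rho>"
    using spec_norm_minus_commute[of \<AA> \<AA>bar] by simp
  have intertwined: "\<AA>hat *v aggregate cl x = aggregate cl (\<AA>bar *v x)" for x
    unfolding \<AA>hat_def \<AA>bar_def aug_eq_blockmat using Tbar_lump by (intro blockmat_aggregate) auto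
  have "jsr Ahat = jsr Abar"
    unfolding Ahat_def Abar_def by (rule jsr_comp_surj[OF part, symmetric])
  show ?thesis
    apply (intro conjI allI impI; elim conjE exE)
    subgoal for \<rho> C
      using spectral_radius_le_perturbed_intertwined[OF linear_aggregate linear_spread
          aggregate_spread[OF part] intertwined _ _ \<AA>bar_diff, where \<rho> = \<rho> and C = C]
        spectral_radius_nonneg[of \<AA>] by force
    subgoal for \<rho> C
      using spectral_radius_le_perturbed[OF _ _ \<AA>_diff, where \<rho> = \<rho> and C = C]
        spectral_radius_nonneg[of \<AA>hat] by force
    subgoal for \<xi> C
      using jsr_le_perturbed[OF _ _ Abar_diff, where \<xi> = \<xi> and C = C] \<open>jsr Ahat = jsr Abar\<close>
        jsr_nonneg[of A] by force
    subgoal for \<xi> C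
      using jsr_le_perturbed[OF _ _ A_diff, where \<xi> = \<xi> and C = C] jsr_nonneg[of Ahat] by force
    done
qed

end
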